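(* Let $B$ be a locally compact Hausdorff space, let $(X,r)$ be a $B$-space, let $(X',r')$ be a $B$-space with $X'$ Hausdorff and $r'$ proper, and let $f\colon X\to X'$ be a $B$-map. Then there is a unique continuous map $f'\colon\beta_BX\to X'$ with $f'\circ i=f$, where $i\colon X\to\beta_BX$ is the canonical map. The map $f'$ is automatically proper.
   Context: A $B$-space is a topological space $Z$ with a continuous map $r\colon Z\to B$; a $B$-map $(Z_1,r_1)\to(Z_2,r_2)$ is a continuous map $f$ with $r_2\circ f=r_1$. For a $B$-space $(X,r)$, let $H_X\subseteq\mathrm{C_b}(X)$ be the closed linear span of products $g\cdot(h\circ r)$ with $g\in\mathrm{C_b}(X)$ and $h\in\mathrm C_0(B)$, a commutative C*-algebra. The relative Stone--Čech compactification $\beta_BX$ is the spectrum of $H_X$ (so $H_X\cong\mathrm C_0(\beta_BX)$), and $i\colon X\to\beta_BX$ maps $x$ to the character $\varphi\mapsto\varphi(x)$. *)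

theory Defs
  imports "HOL-Analysis.Analysis"
begin

definition Cb :: "'a topology \<Rightarrow> ('a \<Rightarrow> complex) set" where
  "Cb X = {g. continuous_map X euclidean g \<and> bounded (g ` topspace X)
              \<and> (\<forall>x. x \<notin> topspace X \<longrightarrow> g x = 0)}"

definition C0 :: "'b topology \<Rightarrow> ('b \<Rightarrow> complex) set" where
  "C0 B = {h. continuous_map B euclidean h
              \<and> (\<forall>e>0. \<exists>K. compactin B K \<and> (\<forall>y \<in> topspace B - K. norm (h y) < e))
              \<and> (\<forall>y. y \<notin> topspace B \<longrightarrow> h y = 0)}"

definition Hspan :: "'a topology \<Rightarrow> 'b topology \<Rightarrow> ('a \<Rightarrow> 'b) \<Rightarrow> ('a \<Rightarrow> complex) set" where
  "Hspan X B r = {(\<lambda>x. \<Sum>i<n. g i x * h i (r x)) | (n::nat) g h.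
                    \<forall>i<n. g i \<in> Cb X \<and> h i \<in> C0 B}"

definition HX :: "'a topology \<Rightarrow> 'b topology \<Rightarrow> ('a \<Rightarrow> 'b) \<Rightarrow> ('a \<Rightarrow> complex) set" where
  "HX X B r = {f \<in> Cb X. \<forall>e>0. \<exists>s \<in> Hspan X B r. \<forall>x \<in> topspace X. norm (f x - s x) < e}"

definition characters :: "('a \<Rightarrow> complex) set \<Rightarrow> (('a \<Rightarrow> complex) \<Rightarrow> complex) set" where
  "characters H = {\<phi> \<in> extensional H.
      (\<forall>a\<in>H. \<forall>b\<in>H. \<phi> (\<lambda>x. a x + b x) = \<phi> a + \<phi> b)
    \<and> (\<forall>a\<in>H. \<forall>c. \<phi> (\<lambda>x. c * a x) = c * \<phi> a)
    \<and> (\<forall>a\<in>H. \<forall>b\<in>H. \<phi> (\<lambda>x. a x * b x) = \<phi> a * \<phi> b)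
    \<and> (\<exists>a\<in>H. \<phi> a \<noteq> 0)}"

text \<open>Relative Stone-Cech compactification: spectrum of H_X with the weak-* topology
  (= subspace topology of the product topology of pointwise evaluation).\<close>
definition betaB :: "'a topology \<Rightarrow> 'b topology \<Rightarrow> ('a \<Rightarrow> 'b)
                     \<Rightarrow> (('a \<Rightarrow> complex) \<Rightarrow> complex) topology" where
  "betaB X B r = subtopology (product_topology (\<lambda>_. euclidean) (HX X B r)) (characters (HX X B r))"

definition betaI :: "'a topology \<Rightarrow> 'b topology \<Rightarrow> ('a \<Rightarrow> 'b) \<Rightarrow> 'a
                     \<Rightarrow> (('a \<Rightarrow> complex) \<Rightarrow> complex)" where
  "betaI X B r x = restrict (\<lambda>g. g x) (HX X B r)"

end

theory Submission
  imports Defs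
begin

text \<open>
  A point p of beta_B X is a character of H_X, and for finitely many a in H_X there are points
  x of X at which every a x is close to p a. Functions in H_X are small off preimages of compact
  subsets of B, and r' is proper, so for a unit e of p the images under f of these sets
  eventually lie in a compact subset of X'; they therefore have a common closure point f'(p),
  and p (g \<circ> f) = g (f'(p)) for every compactly supported continuous g on X'. Urysohn
  functions then give continuity of f' and f' \<circ> i = f, and uniqueness follows from the
  density of i(X). Any continuous extension is proper: the preimage of a compact K \<subseteq> X' is closed
  and lies in the compact set of characters q with q (h \<circ> r) = 1, where h \<in> C0(B) is 1 on r'(K).
\<close>

section \<open>The ideal H_X of bounded continuous functions\<close>

lemma continuous_map_mult:
  fixes f g :: "'a \<Rightarrow> 'b::real_normed_algebra"
  shows "continuous_map X euclidean f \<Longrightarrow> continuous_map X euclidean g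
    \<Longrightarrow> continuous_map X euclidean (\<lambda>x. f x * g x)"
  by (simp add: continuous_map_atin tendsto_mult)

lemma continuous_map_cnj:
  "continuous_map X euclidean f \<Longrightarrow> continuous_map X euclidean (\<lambda>x. cnj (f x))"
  by (simp add: continuous_map_atin tendsto_cnj)

lemma continuous_map_inverse:
  fixes f :: "'a \<Rightarrow> 'b::real_normed_div_algebra"
  shows "continuous_map X euclidean f \<Longrightarrow> (\<And>x. x \<in> topspace X \<Longrightarrow> f x \<noteq> 0)
    \<Longrightarrow> continuous_map X euclidean (\<lambda>x. inverse (f x))"
  by (simp add: continuous_map_atin tendsto_inverse)

lemma continuous_map_of_real:
  "continuous_map X euclidean f \<Longrightarrow>
    continuous_map X euclidean (\<lambda>x. of_real (f x) :: 'b::real_normed_algebra_1)"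
  by (simp add: continuous_map_atin tendsto_of_real)

definition zero_off :: "'a topology \<Rightarrow> ('a \<Rightarrow> complex) \<Rightarrow> 'a \<Rightarrow> complex" where
  "zero_off X g x = (if x \<in> topspace X then g x else 0)"

lemma continuous_map_zero_off:
  "continuous_map X euclidean g \<Longrightarrow> continuous_map X euclidean (zero_off X g)"
  by (rule continuous_map_eq) (auto simp: zero_off_def)

lemma zero_off_in_Cb:
  assumes "continuous_map X euclidean g" "\<And>x. x \<in> topspace X \<Longrightarrow> norm (g x) \<le> M"
  shows "zero_off X g \<in> Cb X"
  unfolding Cb_def bounded_iff
  using assms continuous_map_zero_off by (fastforce simp: zero_off_def)

lemma Cb_continuous: "g \<in> Cb X \<Longrightarrow> continuous_map X euclidean g"
  by (simp add: Cb_def)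

lemma Cb_outside: "g \<in> Cb X \<Longrightarrow> x \<notin> topspace X \<Longrightarrow> g x = 0"
  by (simp add: Cb_def)

lemma zero_off_eq: "(\<And>x. x \<notin> topspace X \<Longrightarrow> g x = 0) \<Longrightarrow> zero_off X g = g"
  by (auto simp: zero_off_def)

lemma Cb_bounded:
  assumes "g \<in> Cb X"
  obtains M where "M > 0" "\<And>x. norm (g x) \<le> M"
proof -
  obtain M where M: "M > 0" "\<forall>y \<in> g ` topspace X. norm y \<le> M"
    using assms unfolding Cb_def bounded_pos by blast
  have "norm (g x) \<le> M" for x
    using M assms by (cases "x \<in> topspace X") (auto simp: Cb_outside)
  with M show ?thesis
    using that by blast
qed

lemma Cb_mult:
  assumes "g \<in> Cb X" "k \<in> Cb X"
  shows "(\<lambda>x. g x * k x) \<in> Cb X"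
proof -
  obtain M K where "\<And>x. norm (g x) \<le> M" "\<And>x. norm (k x) \<le> K"
    using Cb_bounded assms by metis
  then have "norm (g x * k x) \<le> M * K" for x
    by (simp add: norm_mult mult_mono')
  then have "zero_off X (\<lambda>x. g x * k x) \<in> Cb X"
    using assms by (intro zero_off_in_Cb continuous_map_mult Cb_continuous)
  moreover have "zero_off X (\<lambda>x. g x * k x) = (\<lambda>x. g x * k x)"
    using assms by (intro zero_off_eq) (simp add: Cb_outside)
  ultimately show ?thesis
    by simp
qed

lemma Cb_add:
  assumes "g \<in> Cb X" "k \<in> Cb X"
  shows "(\<lambda>x. g x + k x) \<in> Cb X"
proof -
  obtain M K where "\<And>x. norm (g x) \<le> M" "\<And>x. norm (k x) \<le> K"
    using Cb_bounded assms by metis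
  then have "norm (g x + k x) \<le> M + K" for x
    by (meson add_mono norm_triangle_ineq order_trans)
  then have "zero_off X (\<lambda>x. g x + k x) \<in> Cb X"
    using assms by (intro zero_off_in_Cb continuous_map_add Cb_continuous)
  moreover have "zero_off X (\<lambda>x. g x + k x) = (\<lambda>x. g x + k x)"
    using assms by (intro zero_off_eq) (simp add: Cb_outside)
  ultimately show ?thesis
    by simp
qed

lemma Cb_cnj: "g \<in> Cb X \<Longrightarrow> (\<lambda>x. cnj (g x)) \<in> Cb X"
  by (auto simp: Cb_def bounded_iff intro: continuous_map_cnj)

lemma Cb_const: "zero_off X (\<lambda>_. c) \<in> Cb X"
  by (rule zero_off_in_Cb[where M = "norm c"]) auto

lemma C0_continuous: "h \<in> C0 B \<Longrightarrow> continuous_map B euclidean h"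
  by (simp add: C0_def)

lemma C0_bounded:
  assumes "h \<in> C0 B"
  obtains M where "\<And>y. norm (h y) \<le> M"
proof -
  obtain K where K: "compactin B K" "\<forall>y \<in> topspace B - K. norm (h y) < 1"
    using assms zero_less_one unfolding C0_def by blast
  have "compact (h ` K)"
    using image_compactin[OF K(1) C0_continuous[OF assms]] by (simp add: compactin_euclidean_iff)
  then obtain M where M: "\<forall>z \<in> h ` K. norm z \<le> M"
    using compact_imp_bounded bounded_iff by metis
  have "norm (h y) \<le> max 1 M" for y
  proof (cases "y \<in> topspace B - K")
    case True
    then have "norm (h y) < 1" using K(2) by blast
    then show ?thesis by linarith
  next
    case False
    then show ?thesis using M assms by (auto simp: C0_def)
  qed
  then show ?thesis
    using that by blast
qed

lemma C0_of_compact_support: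
  assumes "continuous_map B euclidean h" "compactin B L" "\<And>y. y \<in> topspace B - L \<Longrightarrow> h y = 0"
  shows "zero_off B h \<in> C0 B"
  unfolding C0_def using assms continuous_map_zero_off by (fastforce simp: zero_off_def)

lemma Hspan_single:
  "g \<in> Cb X \<Longrightarrow> h \<in> C0 B \<Longrightarrow> (\<lambda>x. g x * h (r x)) \<in> Hspan X B r"
  unfolding Hspan_def by (rule CollectI, rule exI[of _ "1::nat"]) auto

lemma Hspan_mult_Cb:
  assumes "s \<in> Hspan X B r" "k \<in> Cb X"
  shows "(\<lambda>x. s x * k x) \<in> Hspan X B r"
proof -
  obtain n :: nat and g h where s: "s = (\<lambda>x. \<Sum>i<n. g i x * h i (r x))"
    and gh: "\<forall>i<n. g i \<in> Cb X \<and> h i \<in> C0 B"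
    using assms(1) unfolding Hspan_def by blast
  have "(\<lambda>x. s x * k x) = (\<lambda>x. \<Sum>i<n. (g i x * k x) * h i (r x))"
    by (simp add: s sum_distrib_right) (simp add: mult_ac)
  moreover have "\<forall>i<n. (\<lambda>x. g i x * k x) \<in> Cb X \<and> h i \<in> C0 B"
    using gh assms(2) by (auto intro: Cb_mult)
  ultimately show ?thesis
    unfolding Hspan_def
    by (intro CollectI exI[of _ n] exI[of _ "\<lambda>i x. g i x * k x"] exI[of _ h]) simp
qed

lemma Hspan_add:
  assumes "s \<in> Hspan X B r" "t \<in> Hspan X B r"
  shows "(\<lambda>x. s x + t x) \<in> Hspan X B r"
proof -
  obtain n :: nat and g h where s: "s = (\<lambda>x. \<Sum>i<n. g i x * h i (r x))"
    and gh: "\<forall>i<n. g i \<in> Cb X \<and> h i \<in> C0 B"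
    using assms(1) unfolding Hspan_def by blast
  obtain m :: nat and g' h' where t: "t = (\<lambda>x. \<Sum>i<m. g' i x * h' i (r x))"
    and gh': "\<forall>i<m. g' i \<in> Cb X \<and> h' i \<in> C0 B"
    using assms(2) unfolding Hspan_def by blast
  define G where "G i = (if i < n then g i else g' (i - n))" for i
  define K where "K i = (if i < n then h i else h' (i - n))" for i
  have "(\<Sum>i<n+m. G i x * K i (r x)) = s x + t x" for x
  proof -
    have "(\<Sum>i<n+m. G i x * K i (r x))
        = (\<Sum>i<n. G i x * K i (r x)) + (\<Sum>i<m. G (i + n) x * K (i + n) (r x))"
      by (induction m) (simp_all add: ac_simps)
    then show ?thesis
      by (simp add: s t G_def K_def)
  qed
  moreover have "\<forall>i<n+m. G i \<in> Cb X \<and> K i \<in> C0 B"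
    using gh gh' by (auto simp: G_def K_def)
  ultimately show ?thesis
    unfolding Hspan_def by (intro CollectI exI[of _ "n+m"] exI[of _ G] exI[of _ K]) auto
qed

lemma HX_in_Cb: "a \<in> HX X B r \<Longrightarrow> a \<in> Cb X"
  by (simp add: HX_def)

lemma HX_outside: "a \<in> HX X B r \<Longrightarrow> x \<notin> topspace X \<Longrightarrow> a x = 0"
  by (meson HX_in_Cb Cb_outside)

lemma HX_approx:
  assumes "a \<in> HX X B r" "e > 0"
  obtains s where "s \<in> Hspan X B r" "\<And>x. x \<in> topspace X \<Longrightarrow> norm (a x - s x) < e"
  using assms unfolding HX_def by blast

lemma HX_mult_Cb:
  assumes a: "a \<in> HX X B r" and k: "k \<in> Cb X"
  shows "(\<lambda>x. a x * k x) \<in> HX X B r"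
proof -
  obtain K where K: "K > 0" "\<And>x. norm (k x) \<le> K"
    using Cb_bounded k by blast
  have "\<exists>s\<in>Hspan X B r. \<forall>x\<in>topspace X. norm (a x * k x - s x) < e" if "e > 0" for e
  proof -
    obtain s where s: "s \<in> Hspan X B r" "\<And>x. x \<in> topspace X \<Longrightarrow> norm (a x - s x) < e / K"
      using HX_approx[OF a] \<open>e > 0\<close> K(1) by (metis divide_pos_pos)
    show ?thesis
    proof (intro bexI ballI)
      show "(\<lambda>x. s x * k x) \<in> Hspan X B r"
        using s(1) k by (rule Hspan_mult_Cb)
      fix x
      assume x: "x \<in> topspace X"
      have "norm (a x * k x - s x * k x) = norm (a x - s x) * norm (k x)"
        by (simp add: norm_mult flip: left_diff_distrib)
      also have "\<dots> \<le> norm (a x - s x) * K"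
        using K by (simp add: mult_left_mono)
      also have "\<dots> < e"
        using s(2)[OF x] K(1) by (simp add: pos_less_divide_eq)
      finally show "norm (a x * k x - s x * k x) < e" .
    qed
  qed
  then show ?thesis
    using a k by (simp add: HX_def Cb_mult)
qed

lemma HX_add:
  assumes a: "a \<in> HX X B r" and b: "b \<in> HX X B r"
  shows "(\<lambda>x. a x + b x) \<in> HX X B r"
proof -
  have "\<exists>s\<in>Hspan X B r. \<forall>x\<in>topspace X. norm (a x + b x - s x) < e" if "e > 0" for e
  proof -
    have "e / 2 > 0"
      using that by simp
    then obtain s t where s: "s \<in> Hspan X B r" "\<And>x. x \<in> topspace X \<Longrightarrow> norm (a x - s x) < e / 2"
      and t: "t \<in> Hspan X B r" "\<And>x. x \<in> topspace X \<Longrightarrow> norm (b x - t x) < e / 2"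
      using HX_approx[OF a] HX_approx[OF b] by metis
    show ?thesis
    proof (intro bexI ballI)
      show "(\<lambda>x. s x + t x) \<in> Hspan X B r"
        using s(1) t(1) by (rule Hspan_add)
      fix x
      assume x: "x \<in> topspace X"
      have "norm (a x + b x - (s x + t x)) \<le> norm (a x - s x) + norm (b x - t x)"
        by (metis add_diff_add norm_triangle_ineq)
      then show "norm (a x + b x - (s x + t x)) < e"
        using s(2)[OF x] t(2)[OF x] by linarith
    qed
  qed
  then show ?thesis
    using a b by (simp add: HX_def Cb_add)
qed

lemma HX_scale:
  assumes "a \<in> HX X B r"
  shows "(\<lambda>x. c * a x) \<in> HX X B r"
proof -
  have "(\<lambda>x. c * a x) = (\<lambda>x. a x * zero_off X (\<lambda>_. c) x)"
    using assms by (auto simp: zero_off_def HX_outside)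
  then show ?thesis
    using HX_mult_Cb[OF assms Cb_const] by simp
qed

lemma HX_add_scale:
  "a \<in> HX X B r \<Longrightarrow> b \<in> HX X B r \<Longrightarrow> (\<lambda>x. a x + c * b x) \<in> HX X B r"
  by (intro HX_add HX_scale)

lemma HX_zero: "(\<lambda>_. 0) \<in> HX X B r"
proof -
  have "(\<lambda>_. 0) \<in> Hspan X B r"
    unfolding Hspan_def by (rule CollectI, rule exI[of _ "0::nat"]) simp
  moreover have "(\<lambda>_. 0) \<in> Cb X"
    using Cb_const[of X 0] zero_off_eq[of X "\<lambda>_. 0"] by simp
  ultimately show ?thesis
    unfolding HX_def by force
qed

lemma HX_sum:
  "finite A \<Longrightarrow> (\<And>a. a \<in> A \<Longrightarrow> F a \<in> HX X B r) \<Longrightarrow> (\<lambda>x. \<Sum>a\<in>A. F a x) \<in> HX X B r"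
  by (induction A rule: finite_induct) (simp_all add: HX_zero HX_add)

lemma HX_C0_comp:
  assumes r: "continuous_map X B r" and h: "h \<in> C0 B"
  shows "zero_off X (h \<circ> r) \<in> HX X B r"
proof -
  obtain M where "\<And>y. norm (h y) \<le> M"
    using C0_bounded h by blast
  then have "zero_off X (h \<circ> r) \<in> Cb X"
    using r C0_continuous[OF h] by (intro zero_off_in_Cb continuous_map_compose) auto
  moreover have "zero_off X (h \<circ> r) = (\<lambda>x. zero_off X (\<lambda>_. 1) x * h (r x))"
    by (auto simp: zero_off_def)
  then have "zero_off X (h \<circ> r) \<in> Hspan X B r"
    using Hspan_single[OF Cb_const h] by simp
  ultimately show ?thesis
    unfolding HX_def by force
qed

lemma Cb_family_bounded:
  fixes n :: nat
  assumes "\<And>i. i < n \<Longrightarrow> g i \<in> Cb X"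
  obtains M where "M > 0" "\<And>i x. i < n \<Longrightarrow> norm (g i x) \<le> M"
  using assms
proof (induction n arbitrary: thesis)
  case 0
  show ?case
    by (rule "0.prems"(1)[of 1]) auto
next
  case (Suc n)
  obtain M where M: "M > 0" "\<And>i x. i < n \<Longrightarrow> norm (g i x) \<le> M"
    using Suc.IH Suc.prems(2) by (metis less_SucI)
  obtain M' where "\<And>x. norm (g n x) \<le> M'"
    using Cb_bounded Suc.prems(2) by blast
  with M show ?case
    by (intro Suc.prems(1)[of "max M M'"]) (auto simp: less_Suc_eq le_max_iff_disj)
qed

lemma C0_family_small_off_compact:
  fixes n :: nat
  assumes "\<And>i. i < n \<Longrightarrow> h i \<in> C0 B" "\<eta> > 0"
  obtains K where "compactin B K" "\<And>i y. i < n \<Longrightarrow> y \<in> topspace B - K \<Longrightarrow> norm (h i y) < \<eta>"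
proof -
  have "\<forall>i\<in>{..<n}. \<exists>K. compactin B K \<and> (\<forall>y\<in>topspace B - K. norm (h i y) < \<eta>)"
    using assms by (simp add: C0_def)
  then obtain K where K: "\<And>i. i < n \<Longrightarrow> compactin B (K i) \<and> (\<forall>y\<in>topspace B - K i. norm (h i y) < \<eta>)"
    by (metis lessThan_iff)
  show ?thesis
  proof
    show "compactin B (\<Union>i<n. K i)"
      using K by (intro compactin_Union finite_imageI) auto
  qed (use K in blast)
qed

lemma Hspan_small_off_compact:
  assumes r: "continuous_map X B r" and s: "s \<in> Hspan X B r" and \<delta>: "\<delta> > 0"
  obtains K where "compactin B K" "\<And>x. x \<in> topspace X \<Longrightarrow> r x \<notin> K \<Longrightarrow> norm (s x) < \<delta>"
proof -
  obtain n :: nat and g h where s_eq: "s = (\<lambda>x. \<Sum>i<n. g i x * h i (r x))"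
    and gh: "\<forall>i<n. g i \<in> Cb X \<and> h i \<in> C0 B"
    using s unfolding Hspan_def by blast
  obtain M where M: "M > 0" "\<And>i x. i < n \<Longrightarrow> norm (g i x) \<le> M"
    using Cb_family_bounded gh by metis
  define \<eta> where "\<eta> = \<delta> / (n * M + 1)"
  have "n * M \<ge> 0"
    using M(1) by simp
  then have \<eta>: "\<eta> > 0" "n * M * \<eta> < \<delta>"
    using \<delta> by (auto simp: \<eta>_def field_simps)
  obtain K where K: "compactin B K" "\<And>i y. i < n \<Longrightarrow> y \<in> topspace B - K \<Longrightarrow> norm (h i y) < \<eta>"
    using C0_family_small_off_compact[of n h B \<eta>] gh \<eta>(1) by blast
  show ?thesis
  proof (rule that[OF K(1)])
    fix x
    assume x: "x \<in> topspace X" and rx: "r x \<notin> K"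
    then have "r x \<in> topspace B - K"
      using r by (simp add: continuous_map_def Pi_iff)
    then have "norm (g i x * h i (r x)) \<le> M * \<eta>" if "i < n" for i
      unfolding norm_mult using M(2)[OF that] K(2)[OF that] M(1)
      by (intro mult_mono) (auto simp: less_imp_le)
    then have "norm (s x) \<le> n * M * \<eta>"
      unfolding s_eq using norm_sum[of "\<lambda>i. g i x * h i (r x)" "{..<n}"]
        sum_bounded_above[of "{..<n}" "\<lambda>i. norm (g i x * h i (r x))" "M * \<eta>"] by simp
    then show "norm (s x) < \<delta>"
      using \<eta>(2) by linarith
  qed
qed

lemma HX_small_off_compact:
  assumes r: "continuous_map X B r" and a: "a \<in> HX X B r" and \<delta>: "\<delta> > 0"
  obtains K where "compactin B K" "\<And>x. x \<in> topspace X \<Longrightarrow> r x \<notin> K \<Longrightarrow> norm (a x) < \<delta>"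
proof -
  have \<delta>2: "\<delta> / 2 > 0"
    using \<delta> by simp
  obtain s where s: "s \<in> Hspan X B r" "\<And>x. x \<in> topspace X \<Longrightarrow> norm (a x - s x) < \<delta> / 2"
    using HX_approx[OF a \<delta>2] by blast
  obtain K where K: "compactin B K" "\<And>x. x \<in> topspace X \<Longrightarrow> r x \<notin> K \<Longrightarrow> norm (s x) < \<delta> / 2"
    using Hspan_small_off_compact[OF r s(1) \<delta>2] by blast
  have "norm (a x) < \<delta>" if "x \<in> topspace X" "r x \<notin> K" for x
    using norm_triangle_sub[of "a x" "s x"] s(2)[OF that(1)] K(2)[OF that] by linarith
  with K(1) show ?thesis
    using that by blast
qed

lemma sum_power2_norm_less:
  fixes g :: "'i \<Rightarrow> 'v::real_normed_vector"
  assumes "finite F" "(\<Sum>j\<in>F. (norm (g j))\<^sup>2) < \<delta>\<^sup>2" "\<delta> > 0" "i \<in> F"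
  shows "norm (g i) < \<delta>"
proof -
  have "(norm (g i))\<^sup>2 \<le> (\<Sum>j\<in>F. (norm (g j))\<^sup>2)"
    using assms(1,4) by (intro member_le_sum) auto
  then have "(norm (g i))\<^sup>2 < \<delta>\<^sup>2"
    using assms(2) by linarith
  then show ?thesis
    using assms(3) by (simp add: power_less_imp_less_base)
qed

lemma norm_one_minus_bound:
  fixes z :: complex
  assumes "Re z > 1/2" "norm (z * (1 - z)) < \<delta>"
  shows "norm (1 - z) < 2 * \<delta>"
proof -
  have "norm z > 1/2"
    using assms(1) complex_Re_le_cmod[of z] by linarith
  then have "1/2 * norm (1 - z) \<le> norm z * norm (1 - z)"
    by (intro mult_right_mono) auto
  then show ?thesis
    using assms(2) by (simp add: norm_mult)
qed

section \<open>Characters of H_X\<close>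

locale HX_character =
  fixes X :: "'a topology" and B :: "'b topology" and r :: "'a \<Rightarrow> 'b"
    and p :: "('a \<Rightarrow> complex) \<Rightarrow> complex"
  assumes character: "p \<in> characters (HX X B r)"
begin

abbreviation H where "H \<equiv> HX X B r"

lemma char_add: "a \<in> H \<Longrightarrow> b \<in> H \<Longrightarrow> p (\<lambda>x. a x + b x) = p a + p b"
  using character by (simp add: characters_def)

lemma char_scale: "a \<in> H \<Longrightarrow> p (\<lambda>x. c * a x) = c * p a"
  using character by (simp add: characters_def)

lemma char_mult: "a \<in> H \<Longrightarrow> b \<in> H \<Longrightarrow> p (\<lambda>x. a x * b x) = p a * p b"
  using character by (simp add: characters_def)

lemma char_add_scale: "a \<in> H \<Longrightarrow> b \<in> H \<Longrightarrow> p (\<lambda>x. a x + c * b x) = p a + c * p b"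
  by (simp add: char_add char_scale HX_scale)

lemma char_zero: "p (\<lambda>_. 0) = 0"
  using char_scale[OF HX_zero, of 0] by simp

lemma char_sum:
  "finite A \<Longrightarrow> (\<And>a. a \<in> A \<Longrightarrow> F a \<in> H) \<Longrightarrow> p (\<lambda>x. \<Sum>a\<in>A. F a x) = (\<Sum>a\<in>A. p (F a))"
proof (induction A rule: finite_induct)
  case (insert a A)
  then have "(\<lambda>x. \<Sum>a\<in>A. F a x) \<in> H"
    by (intro HX_sum) auto
  with insert show ?case
    by (simp add: char_add)
qed (simp add: char_zero)

lemma char_unit:
  obtains e where "e \<in> H" "p e = 1"
proof -
  obtain a where a: "a \<in> H" "p a \<noteq> 0"
    using character by (auto simp: characters_def)
  then show ?thesis
    using that[of "\<lambda>x. inverse (p a) * a x"] char_scale[OF a(1)] HX_scale[OF a(1)] by simp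
qed

lemma char_kernel_ideal:
  assumes a: "a \<in> H" "p a = 0" and k: "k \<in> Cb X"
  shows "p (\<lambda>x. a x * k x) = 0"
proof -
  obtain e where e: "e \<in> H" "p e = 1"
    using char_unit by blast
  have "p (\<lambda>x. a x * k x) = p (\<lambda>x. a x * k x) * p e"
    using e by simp
  also have "\<dots> = p (\<lambda>x. a x * k x * e x)"
    using a e k by (simp add: HX_mult_Cb char_mult)
  also have "\<dots> = p (\<lambda>x. a x * (e x * k x))"
    by (simp add: mult_ac)
  also have "\<dots> = p a * p (\<lambda>x. e x * k x)"
    using a e k by (simp add: HX_mult_Cb char_mult)
  finally show ?thesis
    using a by simp
qed

text \<open>Here a = q (a - p a) with q = a k in H, so p a = p q (p a - p a).\<close>
lemma char_eq_zero_if_shift_invertible: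
  assumes a: "a \<in> H" and k: "k \<in> Cb X" and inv: "\<And>x. x \<in> topspace X \<Longrightarrow> (a x - p a) * k x = 1"
  shows "p a = 0"
proof -
  define q where "q x = a x * k x" for x
  have q: "q \<in> H"
    unfolding q_def using a k by (intro HX_mult_Cb)
  have decomp: "a = (\<lambda>x. q x * a x + (- p a) * q x)"
  proof
    fix x
    show "a x = q x * a x + (- p a) * q x"
    proof (cases "x \<in> topspace X")
      case True
      have "q x * a x + (- p a) * q x = a x * ((a x - p a) * k x)"
        by (simp add: q_def algebra_simps)
      then show ?thesis
        using inv[OF True] by simp
    next
      case False
      then show ?thesis
        using HX_outside[OF a] by (simp add: q_def)
    qed
  qed
  have "p a = p (\<lambda>x. q x * a x + (- p a) * q x)"
    by (rule arg_cong[OF decomp])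
  also have "\<dots> = p (\<lambda>x. q x * a x) + (- p a) * p q"
    using q a by (intro char_add_scale HX_mult_Cb HX_in_Cb)
  also have "p (\<lambda>x. q x * a x) = p q * p a"
    using char_mult[OF q a] .
  finally show ?thesis
    by simp
qed

lemma char_value_near:
  assumes a: "a \<in> H" "p a \<noteq> 0" and \<delta>: "\<delta> > 0"
  shows "\<exists>x\<in>topspace X. norm (a x - p a) < \<delta>"
proof (rule ccontr)
  assume "\<not> ?thesis"
  then have far: "norm (a x - p a) \<ge> \<delta>" if "x \<in> topspace X" for x
    using that by (auto simp: not_less)
  then have nz: "a x - p a \<noteq> 0" if "x \<in> topspace X" for x
    using that \<delta> by fastforce
  define k where "k = zero_off X (\<lambda>x. inverse (a x - p a))"
  have "norm (inverse (a x - p a)) \<le> 1 / \<delta>" if "x \<in> topspace X" for x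
    using far[OF that] \<delta> by (simp add: norm_inverse divide_inverse le_imp_inverse_le)
  then have k: "k \<in> Cb X"
    unfolding k_def using a nz
    by (intro zero_off_in_Cb continuous_map_inverse continuous_map_diff)
      (auto intro: Cb_continuous HX_in_Cb)
  have "(a x - p a) * k x = 1" if "x \<in> topspace X" for x
    using nz[OF that] that by (simp add: k_def zero_off_def)
  with a(1) k have "p a = 0"
    by (rule char_eq_zero_if_shift_invertible)
  with a(2) show False
    by simp
qed

lemma char_norm_le:
  assumes a: "a \<in> H" and M: "\<And>x. norm (a x) \<le> M"
  shows "norm (p a) \<le> M"
proof (rule ccontr)
  assume "\<not> ?thesis"
  moreover have "M \<ge> 0"
    using M[of undefined] norm_ge_zero order_trans by blast
  ultimately have "p a \<noteq> 0" "norm (p a) - M > 0"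
    by auto
  then obtain x where "norm (a x - p a) < norm (p a) - M"
    using char_value_near[OF a] by blast
  moreover have "norm (p a) \<le> norm (a x) + norm (a x - p a)"
    by (metis norm_triangle_sub add.commute norm_minus_commute)
  ultimately show False
    using M[of x] by linarith
qed


lemma char_sum_squares:
  assumes F: "finite F" "F \<subseteq> H" "\<And>b. b \<in> F \<Longrightarrow> p b = 0"
  shows "(\<lambda>x. \<Sum>b\<in>F. b x * cnj (b x)) \<in> H" "p (\<lambda>x. \<Sum>b\<in>F. b x * cnj (b x)) = 0"
proof -
  have "(\<lambda>x. b x * cnj (b x)) \<in> H \<and> p (\<lambda>x. b x * cnj (b x)) = 0" if "b \<in> F" for b
  proof -
    have b: "b \<in> H" "p b = 0"
      using that F by auto
    have "(\<lambda>x. cnj (b x)) \<in> Cb X"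
      using b(1) by (intro Cb_cnj HX_in_Cb)
    then show ?thesis
      using b by (simp add: HX_mult_Cb char_kernel_ideal)
  qed
  then show "(\<lambda>x. \<Sum>b\<in>F. b x * cnj (b x)) \<in> H" "p (\<lambda>x. \<Sum>b\<in>F. b x * cnj (b x)) = 0"
    using F(1) by (simp_all add: HX_sum char_sum)
qed

text \<open>With s the sum of the b \<cdot> cnj b, b \<in> F, the function w = e - C s has p w = 1,
  so some x has Re (w x) > 1/2; as s x = \<Sum>|b x|^2 \<ge> 0 and Re (e x) \<le> sup |e|,
  a large C forces every |b x| to be small.\<close>
lemma char_kernel_small:
  assumes e: "e \<in> H" "p e = 1"
    and F: "finite F" "F \<subseteq> H" "\<And>b. b \<in> F \<Longrightarrow> p b = 0" and \<delta>: "\<delta> > 0"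
  shows "\<exists>x\<in>topspace X. Re (e x) > 1/2 \<and> (\<forall>b\<in>F. norm (b x) < \<delta>)"
proof -
  obtain M where M: "M > 0" "\<And>x. norm (e x) \<le> M"
    using Cb_bounded HX_in_Cb[OF e(1)] by blast
  define s where "s x = (\<Sum>b\<in>F. b x * cnj (b x))" for x
  have s: "s \<in> H" "p s = 0"
    unfolding s_def using char_sum_squares[OF F] by simp_all
  define R where "R x = (\<Sum>b\<in>F. (norm (b x))\<^sup>2)" for x
  have sR: "s x = of_real (R x)" for x
    by (simp only: s_def R_def of_real_sum complex_norm_square)
  define C where "C = M / \<delta>\<^sup>2 + 1"
  have C: "C > 0" "M < C * \<delta>\<^sup>2"
    using M \<delta> by (auto simp: C_def field_simps add_pos_pos)
  define w where "w x = e x + (- of_real C) * s x" for x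
  have "w \<in> H" "p w = 1"
    using HX_add_scale[OF e(1) s(1), of "- of_real C"] char_add_scale[OF e(1) s(1), of "- of_real C"]
      e(2) s(2)
    unfolding w_def by auto
  then obtain x where x: "x \<in> topspace X" "norm (w x - 1) < 1/2"
    using char_value_near[of w "1/2"] by auto
  have "Re (w x) > 1/2"
    using x(2) abs_Re_le_cmod[of "w x - 1"] by auto
  then have Re_e: "Re (e x) - C * R x > 1/2"
    by (simp add: w_def sR)
  have R_nonneg: "R x \<ge> 0"
    by (simp add: R_def sum_nonneg)
  have "C * R x < C * \<delta>\<^sup>2"
    using Re_e C(2) M(2)[of x] complex_Re_le_cmod[of "e x"] by linarith
  then have R_small: "R x < \<delta>\<^sup>2"
    using C(1) by simp
  have "norm (b x) < \<delta>" if "b \<in> F" for b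
    using sum_power2_norm_less[OF F(1) R_small[unfolded R_def] \<delta> that] .
  moreover have "C * R x \<ge> 0"
    using C(1) R_nonneg by simp
  then have "Re (e x) > 1/2"
    using Re_e by linarith
  ultimately show ?thesis
    using x(1) by blast
qed

text \<open>Apply char_kernel_small to the kernel elements a - p a \<cdot> e for a \<in> A and for a = e^2:
  at the resulting point e x is close to 1, hence each a x is close to p a.\<close>
lemma char_simultaneous_approx:
  assumes A: "finite A" "A \<subseteq> H" and \<epsilon>: "\<epsilon> > 0"
  shows "\<exists>x\<in>topspace X. \<forall>a\<in>A. norm (a x - p a) < \<epsilon>"
proof -
  obtain e where e: "e \<in> H" "p e = 1"
    using char_unit by blast
  define D where "D a x = a x + (- p a) * e x" for a x
  have D: "D a \<in> H" "p (D a) = 0" if "a \<in> H" for a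
    using that e HX_add_scale[of a X B r e "- p a"] char_add_scale[of a e "- p a"]
    unfolding D_def by auto
  define ee where "ee x = e x * e x" for x
  have ee: "ee \<in> H" "p ee = 1"
    using e char_mult[OF e(1) e(1)] unfolding ee_def by (auto intro: HX_mult_Cb HX_in_Cb)
  define \<Lambda> where "\<Lambda> = (\<Sum>a\<in>A. norm (p a))"
  have \<Lambda>: "\<Lambda> \<ge> 0"
    by (simp add: \<Lambda>_def sum_nonneg)
  define \<delta> where "\<delta> = \<epsilon> / (1 + 2 * \<Lambda>)"
  have \<delta>: "\<delta> > 0" "\<delta> * (1 + 2 * \<Lambda>) = \<epsilon>"
    using \<epsilon> \<Lambda> by (simp_all add: \<delta>_def)
  obtain x where x: "x \<in> topspace X" "Re (e x) > 1/2"
    and small: "\<forall>b\<in>D ` insert ee A. norm (b x) < \<delta>"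
    using char_kernel_small[OF e, of "D ` insert ee A" \<delta>] A D ee(1) \<delta>(1) by auto
  have "D ee x = - (e x * (1 - e x))"
    by (simp add: D_def ee_def ee(2) algebra_simps)
  then have e_near_1: "norm (1 - e x) < 2 * \<delta>"
    using small x(2) by (intro norm_one_minus_bound) (auto simp: norm_minus_commute)
  have "norm (a x - p a) < \<epsilon>" if a: "a \<in> A" for a
  proof -
    have "norm (p a) \<le> \<Lambda>"
      unfolding \<Lambda>_def using a A(1) by (intro member_le_sum) auto
    have "a x - p a = D a x + p a * (e x - 1)"
      by (simp add: D_def algebra_simps)
    then have "norm (a x - p a) \<le> norm (D a x) + norm (p a) * norm (1 - e x)"
      by (metis norm_triangle_ineq norm_mult norm_minus_commute)
    also have "\<dots> < \<delta> + \<Lambda> * (2 * \<delta>)"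
      using small a e_near_1 \<open>norm (p a) \<le> \<Lambda>\<close> \<Lambda>
      by (intro add_less_le_mono mult_mono) auto
    also have "\<dots> = \<epsilon>"
      using \<delta>(2) by (simp add: algebra_simps)
    finally show ?thesis .
  qed
  then show ?thesis
    using x(1) by blast
qed


lemma char_simultaneous_approx_pairs:
  assumes J: "finite J" "\<And>a \<epsilon>. (a, \<epsilon>) \<in> J \<Longrightarrow> a \<in> H \<and> \<epsilon> > 0"
  shows "\<exists>x\<in>topspace X. \<forall>(a, \<epsilon>)\<in>J. norm (a x - p a) < \<epsilon>"
proof -
  define \<epsilon> where "\<epsilon> = Min (insert 1 (snd ` J))"
  have "\<epsilon> > 0"
    using J by (force simp: \<epsilon>_def)
  moreover have "finite (fst ` J)" "fst ` J \<subseteq> H"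
    using J by force+
  ultimately obtain x where x: "x \<in> topspace X" "\<forall>a\<in>fst ` J. norm (a x - p a) < \<epsilon>"
    using char_simultaneous_approx by blast
  have "norm (a x - p a) < \<delta>" if "(a, \<delta>) \<in> J" for a \<delta>
  proof -
    have "\<delta> \<in> insert 1 (snd ` J)"
      using that by force
    then have "\<epsilon> \<le> \<delta>"
      unfolding \<epsilon>_def using J(1) by (intro Min_le) auto
    moreover have "norm (a x - p a) < \<epsilon>"
      using x(2) that by force
    ultimately show ?thesis
      by linarith
  qed
  with x(1) show ?thesis
    by blast
qed

end

section \<open>Urysohn functions and compactness\<close>

lemma Urysohn_C0_locally_compact:
  assumes Y: "locally_compact_space Y" "Hausdorff_space Y"
    and K: "compactin Y K" and V: "openin Y V" "K \<subseteq> V"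
  obtains g L where "g \<in> C0 Y" "compactin Y L" "L \<subseteq> V"
    "\<And>z. z \<in> K \<Longrightarrow> g z = 1" "\<And>z. z \<in> topspace Y - L \<Longrightarrow> g z = 0"
proof -
  have "locally_compact_space (subtopology Y V)"
    using Y V(1) by (intro locally_compact_space_open_subset) auto
  moreover have "compactin (subtopology Y V) K"
    using K V(2) by (simp add: compactin_subtopology)
  ultimately obtain U L where UL: "openin (subtopology Y V) U" "compactin (subtopology Y V) L"
      "K \<subseteq> U" "U \<subseteq> L"
    using locally_compact_space_compact_closed_compact Hausdorff_space_subtopology Y(2) by metis
  have U: "openin Y U"
    using UL(1) V(1) openin_trans_full by blast
  have L: "compactin Y L" "L \<subseteq> V"
    using UL(2) by (auto simp: compactin_subtopology)
  have "completely_regular_space Y"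
    using Y by (simp add: locally_compact_regular_imp_completely_regular_space
        locally_compact_Hausdorff_imp_regular_space)
  then obtain u where u: "continuous_map Y (subtopology euclidean {0..1::real}) u"
      "u ` (topspace Y - U) \<subseteq> {0}" "u ` K \<subseteq> {1}"
    using Urysohn_completely_regular_compact_closed[of 0 1 Y K "topspace Y - U"] K U UL(3)
    by (auto simp: disjnt_def)
  define g where "g = zero_off Y (\<lambda>z. of_real (u z))"
  show ?thesis
  proof
    have "continuous_map Y euclidean (\<lambda>z. complex_of_real (u z))"
      using u(1) by (intro continuous_map_of_real) (simp add: continuous_map_in_subtopology)
    then show "g \<in> C0 Y"
      unfolding g_def using u(2) UL(4) L(1) by (intro C0_of_compact_support) auto
    show "g z = 1" if "z \<in> K" for z
      using that u(3) compactin_subset_topspace[OF K] by (auto simp: g_def zero_off_def)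
    show "g z = 0" if "z \<in> topspace Y - L" for z
      using that u(2) UL(4) by (auto simp: g_def zero_off_def)
  qed (use L in auto)
qed

lemma locally_compact_space_proper_map_preimage:
  assumes "locally_compact_space B" "continuous_map Y B f" "proper_map Y B f"
  shows "locally_compact_space Y"
  unfolding locally_compact_space_def
proof (intro strip)
  fix y
  assume y: "y \<in> topspace Y"
  then have "f y \<in> topspace B"
    using assms(2) by (simp add: continuous_map_def Pi_iff)
  then obtain U K where UK: "openin B U" "compactin B K" "f y \<in> U" "U \<subseteq> K"
    using assms(1) unfolding locally_compact_space_def by blast
  show "\<exists>U K. openin Y U \<and> compactin Y K \<and> y \<in> U \<and> U \<subseteq> K"
  proof (intro exI conjI)
    show "openin Y {z \<in> topspace Y. f z \<in> U}"
      using UK(1) assms(2) by (rule openin_continuous_map_preimage[rotated])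
    show "compactin Y {z \<in> topspace Y. f z \<in> K}"
      using UK(2) assms(3) by (simp add: proper_map_alt)
  qed (use y UK in auto)
qed

lemma compactin_closure_of_fip:
  assumes L: "compactin Y L" and \<S>: "\<And>S. S \<in> \<S> \<Longrightarrow> S \<subseteq> topspace Y"
    and fip: "\<And>\<F>. finite \<F> \<Longrightarrow> \<F> \<subseteq> \<S> \<Longrightarrow> L \<inter> \<Inter>\<F> \<noteq> {}"
  obtains y where "y \<in> L" "\<And>S. S \<in> \<S> \<Longrightarrow> y \<in> Y closure_of S"
proof -
  define \<U> where "\<U> = (\<lambda>S. Y closure_of S) ` \<S>"
  have closed: "\<forall>C\<in>\<U>. closedin Y C"
    by (simp add: \<U>_def)
  have "\<forall>\<F>. finite \<F> \<and> \<F> \<subseteq> \<U> \<longrightarrow> L \<inter> \<Inter>\<F> \<noteq> {}"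
  proof (intro allI impI, elim conjE)
    fix \<F>
    assume \<F>: "finite \<F>" "\<F> \<subseteq> \<U>"
    then obtain \<F>' where \<F>': "\<F>' \<subseteq> \<S>" "finite \<F>'" "\<F> = (\<lambda>S. Y closure_of S) ` \<F>'"
      using finite_subset_image[OF \<F>(1), of "\<lambda>S. Y closure_of S" \<S>] unfolding \<U>_def by blast
    have "\<Inter>\<F>' \<subseteq> \<Inter>\<F>"
    proof
      fix z
      assume z: "z \<in> \<Inter>\<F>'"
      have "z \<in> Y closure_of S" if "S \<in> \<F>'" for S
        using z that closure_of_subset[OF \<S>] \<F>'(1) by blast
      then show "z \<in> \<Inter>\<F>"
        by (simp add: \<F>'(3))
    qed
    then show "L \<inter> \<Inter>\<F> \<noteq> {}"
      using fip[OF \<F>'(2,1)] by blast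
  qed
  moreover have "\<forall>\<U>. (\<forall>C\<in>\<U>. closedin Y C) \<and> (\<forall>\<F>. finite \<F> \<and> \<F> \<subseteq> \<U> \<longrightarrow> L \<inter> \<Inter>\<F> \<noteq> {})
      \<longrightarrow> L \<inter> \<Inter>\<U> \<noteq> {}"
    using L unfolding compactin_fip by (rule conjunct2)
  ultimately have "L \<inter> \<Inter>\<U> \<noteq> {}"
    using closed by blast
  then show ?thesis
    using that unfolding \<U>_def by blast
qed

lemma closedin_Collect_all_eq:
  fixes f g :: "'i \<Rightarrow> 'a \<Rightarrow> 'b::metric_space"
  assumes "\<And>i. i \<in> I \<Longrightarrow> continuous_map X euclidean (f i)"
    "\<And>i. i \<in> I \<Longrightarrow> continuous_map X euclidean (g i)"
  shows "closedin X {x \<in> topspace X. \<forall>i\<in>I. f i x = g i x}"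
proof (cases "I = {}")
  case False
  then have "{x \<in> topspace X. \<forall>i\<in>I. f i x = g i x} = (\<Inter>i\<in>I. {x \<in> topspace X. f i x = g i x})"
    by auto
  then show ?thesis
    using False assms
    by (auto intro!: closedin_INT closedin_continuous_maps_eq[OF Hausdorff_space_euclidean])
qed simp

section \<open>The space beta_B X\<close>

lemma topspace_betaB: "topspace (betaB X B r) = characters (HX X B r)"
  by (auto simp: betaB_def characters_def PiE_def extensional_def)

lemma betaI_apply: "a \<in> HX X B r \<Longrightarrow> betaI X B r x a = a x"
  by (simp add: betaI_def)

lemma continuous_map_product_eval:
  "continuous_map (product_topology (\<lambda>_. euclidean) I) euclidean (\<lambda>q. q b)"
proof (cases "b \<in> I")
  case True
  then show ?thesis
    by (rule continuous_map_product_projection)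
next
  case False
  show ?thesis
  proof (rule continuous_map_eq)
    show "continuous_map (product_topology (\<lambda>_. euclidean) I) euclidean (\<lambda>_. undefined)"
      by simp
    fix q
    assume "q \<in> topspace (product_topology (\<lambda>_. euclidean :: 'b topology) I)"
    then show "undefined = q b"
      using False by (simp add: PiE_def extensional_def)
  qed
qed

lemma continuous_map_betaB_eval: "continuous_map (betaB X B r) euclidean (\<lambda>q. q a)"
  unfolding betaB_def by (intro continuous_map_from_subtopology continuous_map_product_eval)

lemma openin_betaB_basic:
  assumes W: "openin (betaB X B r) W" and p: "p \<in> W"
  obtains A \<epsilon> where "finite A" "A \<subseteq> HX X B r" "\<epsilon> > 0"
    "\<And>q. q \<in> characters (HX X B r) \<Longrightarrow> (\<forall>a\<in>A. norm (q a - p a) < \<epsilon>) \<Longrightarrow> q \<in> W"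
proof -
  let ?H = "HX X B r"
  obtain W' where W': "openin (product_topology (\<lambda>_. euclidean) ?H) W'" "W = W' \<inter> characters ?H"
    using W unfolding betaB_def openin_subtopology by blast
  then obtain U where U: "finite {a \<in> ?H. U a \<noteq> UNIV}" "\<forall>a\<in>?H. open (U a)"
      "p \<in> PiE ?H U" "PiE ?H U \<subseteq> W'"
    using p unfolding openin_product_topology_alt by fastforce
  define A where "A = {a \<in> ?H. U a \<noteq> UNIV}"
  have "\<forall>a\<in>A. \<exists>e>0. ball (p a) e \<subseteq> U a"
    using U(2,3) by (auto simp: A_def PiE_iff open_contains_ball)
  then obtain e where e: "\<And>a. a \<in> A \<Longrightarrow> e a > 0 \<and> ball (p a) (e a) \<subseteq> U a"
    by metis
  define \<epsilon> where "\<epsilon> = Min (insert 1 (e ` A))"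
  have A: "finite A"
    using U(1) by (simp add: A_def)
  show ?thesis
  proof
    show "finite A" "A \<subseteq> ?H" "\<epsilon> > 0"
      using A e by (auto simp: A_def \<epsilon>_def)
    fix q
    assume q: "q \<in> characters ?H" "\<forall>a\<in>A. norm (q a - p a) < \<epsilon>"
    have "q a \<in> U a" if "a \<in> ?H" for a
    proof (cases "a \<in> A")
      case True
      then have "\<epsilon> \<le> e a"
        using A by (simp add: \<epsilon>_def)
      then have "q a \<in> ball (p a) (e a)"
        using q(2) True by (auto simp: dist_norm norm_minus_commute)
      then show ?thesis
        using e[OF True] by blast
    qed (use that in \<open>auto simp: A_def\<close>)
    moreover have "q \<in> extensional ?H"
      using q(1) by (simp add: characters_def)
    ultimately have "q \<in> PiE ?H U"
      by (auto simp: PiE_iff)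
    then show "q \<in> W"
      using U(4) W'(2) q(1) by blast
  qed
qed

lemma closedin_characters_level_set:
  assumes a: "a \<in> H" and c: "c \<noteq> 0"
  shows "closedin (product_topology (\<lambda>_. euclidean) H) {q \<in> characters H. q a = c}"
proof -
  let ?P = "product_topology (\<lambda>_. euclidean) H :: (('a \<Rightarrow> complex) \<Rightarrow> complex) topology"
  have add: "closedin ?P {q \<in> topspace ?P.
      \<forall>t\<in>H \<times> H. q (\<lambda>x. fst t x + snd t x) = q (fst t) + q (snd t)}"
    by (intro closedin_Collect_all_eq continuous_map_add continuous_map_product_eval)
  have scale: "closedin ?P {q \<in> topspace ?P.
      \<forall>t\<in>UNIV \<times> H. q (\<lambda>x. fst t * snd t x) = fst t * q (snd t)}"
    by (intro closedin_Collect_all_eq) (auto intro!: continuous_map_mult continuous_map_product_eval)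
  have mult: "closedin ?P {q \<in> topspace ?P.
      \<forall>t\<in>H \<times> H. q (\<lambda>x. fst t x * snd t x) = q (fst t) * q (snd t)}"
    by (intro closedin_Collect_all_eq continuous_map_mult continuous_map_product_eval)
  have level: "closedin ?P {q \<in> topspace ?P. q a \<in> {c}}"
    by (intro closedin_continuous_map_preimage[where Y = euclidean] continuous_map_product_eval) auto
  have "{q \<in> characters H. q a = c} = {q \<in> topspace ?P.
      \<forall>t\<in>H \<times> H. q (\<lambda>x. fst t x + snd t x) = q (fst t) + q (snd t)} \<inter> {q \<in> topspace ?P.
      \<forall>t\<in>UNIV \<times> H. q (\<lambda>x. fst t * snd t x) = fst t * q (snd t)} \<inter> {q \<in> topspace ?P.
      \<forall>t\<in>H \<times> H. q (\<lambda>x. fst t x * snd t x) = q (fst t) * q (snd t)} \<inter> {q \<in> topspace ?P. q a \<in> {c}}"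
    using a c by (auto simp: characters_def PiE_iff)
  then show ?thesis
    using add scale mult level by (simp add: closedin_Int)
qed

lemma compactin_betaB_level_set:
  assumes a: "a \<in> HX X B r" and c: "c \<noteq> 0"
  shows "compactin (betaB X B r) {q \<in> characters (HX X B r). q a = c}"
proof -
  let ?H = "HX X B r"
  let ?P = "product_topology (\<lambda>_. euclidean) ?H :: (('a \<Rightarrow> complex) \<Rightarrow> complex) topology"
  define T where "T = {q \<in> characters ?H. q a = c}"
  define M where "M b = (SOME M. \<forall>x. norm (b x) \<le> M)" for b :: "'a \<Rightarrow> complex"
  have M: "norm (b x) \<le> M b" if "b \<in> ?H" for b x
  proof -
    have "\<exists>M. \<forall>x. norm (b x) \<le> M"
      using Cb_bounded[OF HX_in_Cb[OF that]] by metis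
    from someI_ex[OF this] show ?thesis
      unfolding M_def by blast
  qed
  have "T \<subseteq> PiE ?H (\<lambda>b. cball 0 (M b))"
  proof
    fix q
    assume q: "q \<in> T"
    then interpret HX_character X B r q
      by unfold_locales (simp add: T_def)
    show "q \<in> PiE ?H (\<lambda>b. cball 0 (M b))"
      using q M char_norm_le by (auto simp: T_def characters_def PiE_iff)
  qed
  moreover have "compactin ?P (PiE ?H (\<lambda>b. cball 0 (M b)))"
    by (simp add: compactin_PiE)
  ultimately have "compactin ?P T"
    using closedin_characters_level_set[OF a c] closed_compactin unfolding T_def by blast
  then show ?thesis
    unfolding betaB_def T_def by (simp add: compactin_subtopology)
qed

locale relative_beta =
  fixes X :: "'a topology" and B :: "'b topology" and r :: "'a \<Rightarrow> 'b"
  assumes locally_compact_B: "locally_compact_space B" and Hausdorff_B: "Hausdorff_space B"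
    and continuous_r: "continuous_map X B r"
begin

abbreviation H where "H \<equiv> HX X B r"

lemma betaI_in_topspace:
  assumes x: "x \<in> topspace X"
  shows "betaI X B r x \<in> topspace (betaB X B r)"
proof -
  have rx: "r x \<in> topspace B"
    using continuous_r x by (simp add: continuous_map_def Pi_iff)
  then have "compactin B {r x}"
    by simp
  then obtain h L where h: "h \<in> C0 B" "compactin B L" "L \<subseteq> topspace B"
    "\<And>y. y \<in> {r x} \<Longrightarrow> h y = 1" "\<And>y. y \<in> topspace B - L \<Longrightarrow> h y = 0"
    by (rule Urysohn_C0_locally_compact[OF locally_compact_B Hausdorff_B _ openin_topspace]) (use rx in auto)
  have a: "zero_off X (h \<circ> r) \<in> H"
    using continuous_r h(1) by (rule HX_C0_comp)
  show ?thesis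
    unfolding topspace_betaB characters_def mem_Collect_eq
  proof (intro conjI ballI allI bexI)
    show "betaI X B r x \<in> extensional H"
      by (simp add: betaI_def)
    show "betaI X B r x (zero_off X (h \<circ> r)) \<noteq> 0"
      using a x h(4) by (simp add: betaI_apply zero_off_def)
    fix a b c
    assume "a \<in> H" "b \<in> H"
    then show "betaI X B r x (\<lambda>z. a z + b z) = betaI X B r x a + betaI X B r x b"
      "betaI X B r x (\<lambda>z. a z * b z) = betaI X B r x a * betaI X B r x b"
      by (simp_all add: betaI_apply HX_add HX_mult_Cb HX_in_Cb)
  next
    fix a c
    assume "a \<in> H"
    then show "betaI X B r x (\<lambda>z. c * a z) = c * betaI X B r x a"
      by (simp add: betaI_apply HX_scale)
  qed (rule a)
qed

lemma betaI_dense: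
  assumes W: "openin (betaB X B r) W" and p: "p \<in> W"
  shows "\<exists>x\<in>topspace X. betaI X B r x \<in> W"
proof -
  obtain A \<epsilon> where A: "finite A" "A \<subseteq> H" "\<epsilon> > 0"
    and basic: "\<And>q. q \<in> characters H \<Longrightarrow> (\<forall>a\<in>A. norm (q a - p a) < \<epsilon>) \<Longrightarrow> q \<in> W"
    by (rule openin_betaB_basic[OF W p]) (rule that)
  have "HX_character X B r p"
    using openin_subset[OF W] p by unfold_locales (auto simp: topspace_betaB)
  then obtain x where x: "x \<in> topspace X" "\<forall>a\<in>A. norm (a x - p a) < \<epsilon>"
    using HX_character.char_simultaneous_approx[OF _ A] by blast
  have "\<forall>a\<in>A. norm (betaI X B r x a - p a) < \<epsilon>"
    using x(2) A(2) betaI_apply by (metis subsetD)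
  then have "betaI X B r x \<in> W"
    using basic betaI_in_topspace[OF x(1)] by (simp add: topspace_betaB)
  with x(1) show ?thesis
    by blast
qed

lemma betaB_continuous_map_eq:
  assumes Z: "Hausdorff_space Z"
    and g: "continuous_map (betaB X B r) Z g" "continuous_map (betaB X B r) Z g'"
    and eq: "\<And>x. x \<in> topspace X \<Longrightarrow> g (betaI X B r x) = g' (betaI X B r x)"
    and p: "p \<in> topspace (betaB X B r)"
  shows "g p = g' p"
proof (rule ccontr)
  assume "g p \<noteq> g' p"
  let ?W = "{q \<in> topspace (betaB X B r). g q \<noteq> g' q}"
  have "openin (betaB X B r) (topspace (betaB X B r) - {q \<in> topspace (betaB X B r). g q = g' q})"
    using closedin_continuous_maps_eq[OF Z g] unfolding closedin_def by (rule conjunct2)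
  also have "topspace (betaB X B r) - {q \<in> topspace (betaB X B r). g q = g' q} = ?W"
    by blast
  finally have "openin (betaB X B r) ?W" .
  moreover have "p \<in> ?W"
    using p \<open>g p \<noteq> g' p\<close> by simp
  ultimately obtain x where "x \<in> topspace X" "betaI X B r x \<in> ?W"
    using betaI_dense by blast
  then show False
    using eq by simp
qed

end

section \<open>The extension of f\<close>

locale relative_beta_extension = relative_beta X B r
  for X :: "'a topology" and B :: "'b topology" and r :: "'a \<Rightarrow> 'b" +
  fixes Y :: "'c topology" and r' :: "'c \<Rightarrow> 'b" and f :: "'a \<Rightarrow> 'c"
  assumes Hausdorff_Y: "Hausdorff_space Y" and continuous_r': "continuous_map Y B r'"
    and proper_r': "proper_map Y B r'" and continuous_f: "continuous_map X Y f"
    and over_B: "\<And>x. x \<in> topspace X \<Longrightarrow> r' (f x) = r x"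
begin

lemma locally_compact_Y: "locally_compact_space Y"
  using locally_compact_B continuous_r' proper_r' by (rule locally_compact_space_proper_map_preimage)

lemma pullback_in_HX:
  assumes g: "g \<in> C0 Y" and L: "compactin Y L" "\<And>z. z \<in> topspace Y - L \<Longrightarrow> g z = 0"
  shows "zero_off X (g \<circ> f) \<in> H"
proof -
  have K: "compactin B (r' ` L)"
    using L(1) continuous_r' by (rule image_compactin)
  obtain h L' where h: "h \<in> C0 B" "compactin B L'" "L' \<subseteq> topspace B"
    "\<And>y. y \<in> r' ` L \<Longrightarrow> h y = 1" "\<And>y. y \<in> topspace B - L' \<Longrightarrow> h y = 0"
    by (rule Urysohn_C0_locally_compact[OF locally_compact_B Hausdorff_B K openin_topspace])
      (use compactin_subset_topspace[OF K] in auto)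
  obtain M where "\<And>z. norm (g z) \<le> M"
    using C0_bounded g by blast
  then have gf: "zero_off X (g \<circ> f) \<in> Cb X"
    using continuous_f C0_continuous[OF g] by (intro zero_off_in_Cb continuous_map_compose) auto
  have "zero_off X (g \<circ> f) = (\<lambda>x. zero_off X (h \<circ> r) x * zero_off X (g \<circ> f) x)"
  proof
    fix x
    show "zero_off X (g \<circ> f) x = zero_off X (h \<circ> r) x * zero_off X (g \<circ> f) x"
    proof (cases "x \<in> topspace X \<and> f x \<in> L")
      case True
      then have "h (r x) = 1"
        using h(4) over_B by (metis image_eqI)
      then show ?thesis
        by (simp add: zero_off_def)
    next
      case False
      then show ?thesis
        using L(2) continuous_f by (auto simp: zero_off_def continuous_map_def Pi_iff)
    qed
  qed
  then show ?thesis
    using HX_mult_Cb[OF HX_C0_comp[OF continuous_r h(1)] gf] by simp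
qed

lemma pullback_bump:
  assumes V: "openin Y V" "y \<in> V"
  obtains g where "continuous_map Y euclidean g" "g y = 1" "\<And>z. z \<in> topspace Y - V \<Longrightarrow> g z = 0"
    "zero_off X (g \<circ> f) \<in> H"
proof -
  have "compactin Y {y}"
    using V openin_subset by fastforce
  then obtain g L where g: "g \<in> C0 Y" "compactin Y L" "L \<subseteq> V"
    "\<And>z. z \<in> {y} \<Longrightarrow> g z = 1" "\<And>z. z \<in> topspace Y - L \<Longrightarrow> g z = 0"
    by (rule Urysohn_C0_locally_compact[OF locally_compact_Y Hausdorff_Y _ V(1)]) (use V(2) in auto)
  show ?thesis
  proof (rule that)
    show "continuous_map Y euclidean g"
      using g(1) by (rule C0_continuous)
    show "g y = 1"
      using g(4) by simp
    show "g z = 0" if "z \<in> topspace Y - V" for z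
      using that g(3,5) by blast
    show "zero_off X (g \<circ> f) \<in> H"
      using g(1,2,5) by (rule pullback_in_HX)
  qed
qed

text \<open>By Gelfand duality, y corresponds to the character g \<mapsto> p (g \<circ> f) of C0(Y);
  it is tested on those g whose pullback lies in H_X.\<close>
definition represents :: "(('a \<Rightarrow> complex) \<Rightarrow> complex) \<Rightarrow> 'c \<Rightarrow> bool" where
  "represents p y \<longleftrightarrow> y \<in> topspace Y \<and> (\<forall>g. continuous_map Y euclidean g \<longrightarrow>
      zero_off X (g \<circ> f) \<in> H \<longrightarrow> p (zero_off X (g \<circ> f)) = g y)"

definition extension :: "(('a \<Rightarrow> complex) \<Rightarrow> complex) \<Rightarrow> 'c" where
  "extension p = (SOME y. represents p y)"

lemma cluster_point_represents:
  assumes y: "y \<in> topspace Y"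
    and cluster: "\<And>a \<epsilon>. a \<in> H \<Longrightarrow> \<epsilon> > 0 \<Longrightarrow>
      y \<in> Y closure_of (f ` {x \<in> topspace X. norm (a x - p a) < \<epsilon>})"
  shows "represents p y"
  unfolding represents_def
proof (intro conjI y allI impI)
  fix g
  assume g: "continuous_map Y euclidean g" and a: "zero_off X (g \<circ> f) \<in> H"
  let ?a = "zero_off X (g \<circ> f)"
  show "p ?a = g y"
  proof (rule ccontr)
    assume "p ?a \<noteq> g y"
    define \<epsilon> where "\<epsilon> = norm (p ?a - g y) / 2"
    have \<epsilon>: "\<epsilon> > 0"
      using \<open>p ?a \<noteq> g y\<close> by (simp add: \<epsilon>_def)
    let ?N = "{z \<in> topspace Y. g z \<in> ball (g y) \<epsilon>}"
    have "openin Y ?N"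
      using g open_ball by (rule openin_continuous_map_preimage[where Y = euclidean, OF _ open_openin[THEN iffD1]])
    then have N: "y \<in> ?N \<and> openin Y ?N"
      using y \<epsilon> by simp
    have "\<forall>T. y \<in> T \<and> openin Y T \<longrightarrow>
        (\<exists>z. z \<in> f ` {x \<in> topspace X. norm (?a x - p ?a) < \<epsilon>} \<and> z \<in> T)"
      using cluster[OF a \<epsilon>] unfolding in_closure_of by (rule conjunct2)
    from spec[OF this, of ?N] N
    have "\<exists>z. z \<in> f ` {x \<in> topspace X. norm (?a x - p ?a) < \<epsilon>} \<and> z \<in> ?N"
      by (rule mp)
    then obtain x where x: "x \<in> topspace X" "norm (?a x - p ?a) < \<epsilon>" "f x \<in> ?N"
      by blast
    then have "norm (g y - g (f x)) < \<epsilon>"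
      by (simp add: dist_norm)
    have "norm (p ?a - g y) \<le> norm (p ?a - g (f x)) + norm (g (f x) - g y)"
      using norm_triangle_ineq[of "p ?a - g (f x)" "g (f x) - g y"] by simp
    also have "\<dots> = norm (?a x - p ?a) + norm (g y - g (f x))"
      using x(1) by (simp add: zero_off_def norm_minus_commute)
    also have "\<dots> < 2 * \<epsilon>"
      using x(2) \<open>norm (g y - g (f x)) < \<epsilon>\<close> by simp
    finally show False
      by (simp add: \<epsilon>_def)
  qed
qed

lemma image_near_one_compact:
  assumes e: "e \<in> H"
  obtains L where "compactin Y L" "\<And>x. x \<in> topspace X \<Longrightarrow> norm (e x - 1) < 1/2 \<Longrightarrow> f x \<in> L"
proof -
  have half: "(1/2 :: real) > 0"
    by simp
  obtain K where K: "compactin B K" "\<And>x. x \<in> topspace X \<Longrightarrow> r x \<notin> K \<Longrightarrow> norm (e x) < 1/2"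
    by (rule HX_small_off_compact[OF continuous_r e half]) (rule that)
  show ?thesis
  proof
    show "compactin Y {z \<in> topspace Y. r' z \<in> K}"
      using proper_r' K(1) by (simp add: proper_map_alt)
    fix x
    assume x: "x \<in> topspace X" and near: "norm (e x - 1) < 1/2"
    have "1 \<le> norm (e x) + norm (e x - 1)"
      using norm_triangle_ineq[of "e x" "1 - e x"] by (simp add: norm_minus_commute)
    then have "r x \<in> K"
      using K(2)[OF x] near by force
    then show "f x \<in> {z \<in> topspace Y. r' z \<in> K}"
      using x continuous_f over_B by (auto simp: continuous_map_def Pi_iff)
  qed
qed

lemma near_images_fip:
  assumes p: "p \<in> characters H" and e: "e \<in> H" "p e = 1"
    and L: "\<And>x. x \<in> topspace X \<Longrightarrow> norm (e x - 1) < 1/2 \<Longrightarrow> f x \<in> L"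
    and \<F>: "finite \<F>" "\<F> \<subseteq> (\<lambda>(a, \<epsilon>). f ` {x \<in> topspace X. norm (a x - p a) < \<epsilon>}) ` (H \<times> {0<..})"
  shows "L \<inter> \<Inter>\<F> \<noteq> {}"
proof -
  define N where "N = (\<lambda>(a, \<epsilon>). f ` {x \<in> topspace X. norm (a x - p a) < \<epsilon>})"
  obtain J where J: "J \<subseteq> H \<times> {0<..}" "finite J" "\<F> = N ` J"
    using finite_subset_image[OF \<F>(1), of N "H \<times> {0<..}"] \<F>(2) unfolding N_def by blast
  have fin: "finite (insert (e, 1/2) J)"
    using J(2) by simp
  have pairs: "a \<in> H \<and> \<epsilon> > 0" if "(a, \<epsilon>) \<in> insert (e, 1/2) J" for a \<epsilon>
    using that J(1) e(1) by auto
  have "HX_character X B r p"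
    using p by unfold_locales
  then obtain x where x: "x \<in> topspace X" "\<forall>(a, \<epsilon>)\<in>insert (e, 1/2) J. norm (a x - p a) < \<epsilon>"
    using HX_character.char_simultaneous_approx_pairs[OF _ fin pairs] by blast
  have "f x \<in> L"
    using x e(2) L by simp
  moreover have "f x \<in> N j" if "j \<in> J" for j
    using x that by (auto simp: N_def)
  ultimately show ?thesis
    using J(3) by blast
qed

lemma represents_exists:
  assumes p: "p \<in> characters H"
  shows "\<exists>y. represents p y"
proof -
  have pc: "HX_character X B r p"
    using p by unfold_locales
  obtain e where e: "e \<in> H" "p e = 1"
    by (rule HX_character.char_unit[OF pc]) (rule that)
  obtain L where L: "compactin Y L" "\<And>x. x \<in> topspace X \<Longrightarrow> norm (e x - 1) < 1/2 \<Longrightarrow> f x \<in> L"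
    by (rule image_near_one_compact[OF e(1)]) (rule that)
  define N where "N = (\<lambda>(a, \<epsilon>). f ` {x \<in> topspace X. norm (a x - p a) < \<epsilon>})"
  define I :: "(('a \<Rightarrow> complex) \<times> real) set" where "I = H \<times> {0<..}"
  have fip: "L \<inter> \<Inter>\<F> \<noteq> {}" if "finite \<F>" "\<F> \<subseteq> N ` I" for \<F>
    using near_images_fip[OF p e L(2)] that unfolding N_def I_def by blast
  have sub: "S \<subseteq> topspace Y" if "S \<in> N ` I" for S
    using that continuous_f by (auto simp: N_def continuous_map_def Pi_iff)
  obtain y where y: "y \<in> L" "\<And>S. S \<in> N ` I \<Longrightarrow> y \<in> Y closure_of S"
    by (rule compactin_closure_of_fip[OF L(1), of "N ` I"]) (assumption | rule sub fip that)+
  have "represents p y"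
  proof (rule cluster_point_represents)
    show "y \<in> topspace Y"
      using y(1) compactin_subset_topspace[OF L(1)] by blast
    fix a and \<epsilon> :: real
    assume "a \<in> H" "\<epsilon> > 0"
    then have "N (a, \<epsilon>) \<in> N ` I"
      by (simp add: I_def)
    then show "y \<in> Y closure_of (f ` {x \<in> topspace X. norm (a x - p a) < \<epsilon>})"
      using y(2) by (simp add: N_def)
  qed
  then show ?thesis
    by blast
qed

lemma extension_represents: "p \<in> characters H \<Longrightarrow> represents p (extension p)"
  unfolding extension_def using represents_exists by (rule someI_ex)

lemma extension_eval:
  assumes p: "p \<in> characters H" and g: "continuous_map Y euclidean g" "zero_off X (g \<circ> f) \<in> H"
  shows "p (zero_off X (g \<circ> f)) = g (extension p)"
  using extension_represents[OF p] g by (simp add: represents_def)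

lemma extension_betaI:
  assumes x: "x \<in> topspace X"
  shows "extension (betaI X B r x) = f x"
proof (rule ccontr)
  let ?y = "extension (betaI X B r x)"
  assume "?y \<noteq> f x"
  have p: "betaI X B r x \<in> characters H"
    using betaI_in_topspace[OF x] by (simp add: topspace_betaB)
  have "f x \<in> topspace Y"
    using continuous_f x by (simp add: continuous_map_def Pi_iff)
  then have "openin Y (topspace Y - {f x})"
    using closedin_t1_singleton[OF Hausdorff_imp_t1_space[OF Hausdorff_Y]]
    unfolding closedin_def by blast
  moreover have "?y \<in> topspace Y - {f x}"
    using extension_represents[OF p] \<open>?y \<noteq> f x\<close> by (simp add: represents_def)
  ultimately obtain g where g: "continuous_map Y euclidean g" "g ?y = 1"
      "\<And>z. z \<in> topspace Y - (topspace Y - {f x}) \<Longrightarrow> g z = 0" "zero_off X (g \<circ> f) \<in> H"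
    by (rule pullback_bump) (rule that)
  have "g ?y = betaI X B r x (zero_off X (g \<circ> f))"
    using extension_eval[OF p g(1,4)] by simp
  also have "\<dots> = g (f x)"
    using g(4) x by (simp add: betaI_apply zero_off_def)
  also have "\<dots> = 0"
    using g(3) \<open>f x \<in> topspace Y\<close> by blast
  finally show False
    using g(2) by simp
qed

text \<open>Near q0, with g a bump at extension q0 supported in V, the open condition
  |q (g o f) - 1| < 1/2 forces g (extension q) \<noteq> 0, i.e. extension q \<in> V.\<close>
lemma continuous_map_extension: "continuous_map (betaB X B r) Y extension"
  unfolding continuous_map_def
proof (intro conjI allI impI)
  show "extension \<in> topspace (betaB X B r) \<rightarrow> topspace Y"
    using extension_represents by (auto simp: topspace_betaB represents_def)
  fix V
  assume V: "openin Y V"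
  show "openin (betaB X B r) {q \<in> topspace (betaB X B r). extension q \<in> V}"
  proof (subst openin_subopen, intro ballI)
    fix q0
    assume "q0 \<in> {q \<in> topspace (betaB X B r). extension q \<in> V}"
    then have q0: "q0 \<in> characters H" "extension q0 \<in> V"
      by (auto simp: topspace_betaB)
    obtain g where g: "continuous_map Y euclidean g" "g (extension q0) = 1"
        "\<And>z. z \<in> topspace Y - V \<Longrightarrow> g z = 0" "zero_off X (g \<circ> f) \<in> H"
      by (rule pullback_bump[OF V q0(2)]) (rule that)
    define W where "W = {q \<in> topspace (betaB X B r). q (zero_off X (g \<circ> f)) \<in> ball 1 (1/2)}"
    have "openin (betaB X B r) W"
      unfolding W_def using continuous_map_betaB_eval open_ball
      by (rule openin_continuous_map_preimage[where Y = euclidean, OF _ open_openin[THEN iffD1]])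
    moreover have "q0 \<in> W"
      using q0 extension_eval[OF q0(1) g(1,4)] g(2) by (simp add: W_def topspace_betaB)
    moreover have "W \<subseteq> {q \<in> topspace (betaB X B r). extension q \<in> V}"
    proof
      fix q
      assume q: "q \<in> W"
      then have "q \<in> characters H"
        by (simp add: W_def topspace_betaB)
      then have "g (extension q) \<noteq> 0" "extension q \<in> topspace Y"
        using q extension_eval[OF _ g(1,4)] extension_represents
        by (auto simp: W_def represents_def)
      then show "q \<in> {q \<in> topspace (betaB X B r). extension q \<in> V}"
        using q g(3) by (auto simp: W_def)
    qed
    ultimately show "\<exists>T. openin (betaB X B r) T \<and> q0 \<in> T \<and>
        T \<subseteq> {q \<in> topspace (betaB X B r). extension q \<in> V}"
      by blast
  qed
qed

lemma continuous_extension_eval_C0: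
  assumes F: "continuous_map (betaB X B r) Y F" and F_ext: "\<And>x. x \<in> topspace X \<Longrightarrow> F (betaI X B r x) = f x"
    and h: "h \<in> C0 B" and q: "q \<in> topspace (betaB X B r)"
  shows "q (zero_off X (h \<circ> r)) = h (r' (F q))"
proof -
  have "continuous_map (betaB X B r) euclidean (\<lambda>q. h (r' (F q)))"
    using continuous_map_compose[OF continuous_map_compose[OF F continuous_r'] C0_continuous[OF h]]
    by (simp add: o_def)
  then show ?thesis
  proof (rule betaB_continuous_map_eq[OF Hausdorff_space_euclidean continuous_map_betaB_eval _ _ q])
    fix x
    assume "x \<in> topspace X"
    then show "betaI X B r x (zero_off X (h \<circ> r)) = h (r' (F (betaI X B r x)))"
      using HX_C0_comp[OF continuous_r h] by (simp add: betaI_apply zero_off_def F_ext over_B)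
  qed
qed

lemma proper_map_continuous_extension:
  assumes F: "continuous_map (betaB X B r) Y F" and F_ext: "\<And>x. x \<in> topspace X \<Longrightarrow> F (betaI X B r x) = f x"
  shows "proper_map (betaB X B r) Y F"
proof (rule compact_imp_proper_map)
  show "k_space Y"
    using locally_compact_Y by (rule locally_compact_imp_k_space)
  show "kc_space Y"
    using Hausdorff_Y by (rule Hausdorff_imp_kc_space)
  show "F \<in> topspace (betaB X B r) \<rightarrow> topspace Y" "continuous_map (betaB X B r) Y F \<or> kc_space (betaB X B r)"
    using F by (simp_all add: continuous_map_def)
  fix K
  assume K: "compactin Y K"
  have rK: "compactin B (r' ` K)"
    using K continuous_r' by (rule image_compactin)
  obtain h L where h: "h \<in> C0 B" "compactin B L" "L \<subseteq> topspace B"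
    "\<And>y. y \<in> r' ` K \<Longrightarrow> h y = 1" "\<And>y. y \<in> topspace B - L \<Longrightarrow> h y = 0"
    by (rule Urysohn_C0_locally_compact[OF locally_compact_B Hausdorff_B rK openin_topspace])
      (use compactin_subset_topspace[OF rK] in auto)
  let ?a = "zero_off X (h \<circ> r)"
  have a: "?a \<in> H"
    using continuous_r h(1) by (rule HX_C0_comp)
  have "{q \<in> topspace (betaB X B r). F q \<in> K} \<subseteq> {q \<in> characters H. q ?a = 1}"
  proof
    fix q
    assume q: "q \<in> {q \<in> topspace (betaB X B r). F q \<in> K}"
    then have "q ?a = h (r' (F q))"
      using continuous_extension_eval_C0[OF F F_ext h(1)] by blast
    also have "\<dots> = 1"
      using q h(4) by blast
    finally show "q \<in> {q \<in> characters H. q ?a = 1}"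
      using q by (simp add: topspace_betaB)
  qed
  moreover have "closedin (betaB X B r) {q \<in> topspace (betaB X B r). F q \<in> K}"
    using F compactin_imp_closedin[OF Hausdorff_Y K] by (rule closedin_continuous_map_preimage)
  ultimately show "compactin (betaB X B r) {q \<in> topspace (betaB X B r). F q \<in> K}"
    using closed_compactin compactin_betaB_level_set[OF a one_neq_zero] by blast
qed

end

theorem proposition4p8:
  fixes B :: "'b topology" and X :: "'a topology" and X' :: "'c topology"
    and r :: "'a \<Rightarrow> 'b" and r' :: "'c \<Rightarrow> 'b" and f :: "'a \<Rightarrow> 'c"
  assumes "locally_compact_space B" and "Hausdorff_space B"
    and "continuous_map X B r"
    and "Hausdorff_space X'" and "continuous_map X' B r'" and "proper_map X' B r'"
    and "continuous_map X X' f" and "\<forall>x \<in> topspace X. r' (f x) = r x"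
  shows "(\<exists>f'. continuous_map (betaB X B r) X' f'
              \<and> (\<forall>x \<in> topspace X. f' (betaI X B r x) = f x))
       \<and> (\<forall>f1 f2. continuous_map (betaB X B r) X' f1
              \<and> (\<forall>x \<in> topspace X. f1 (betaI X B r x) = f x)
              \<and> continuous_map (betaB X B r) X' f2
              \<and> (\<forall>x \<in> topspace X. f2 (betaI X B r x) = f x)
              \<longrightarrow> (\<forall>p \<in> topspace (betaB X B r). f1 p = f2 p))
       \<and> (\<forall>f'. continuous_map (betaB X B r) X' f'
              \<and> (\<forall>x \<in> topspace X. f' (betaI X B r x) = f x)
              \<longrightarrow> proper_map (betaB X B r) X' f')"
proof -
  interpret relative_beta_extension X B r X' r' f
    using assms by unfold_locales auto
  have "continuous_map (betaB X B r) X' extension \<and>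
      (\<forall>x \<in> topspace X. extension (betaI X B r x) = f x)"
    using continuous_map_extension extension_betaI by blast
  moreover have "f1 p = f2 p"
    if "continuous_map (betaB X B r) X' f1" "continuous_map (betaB X B r) X' f2"
      "\<forall>x \<in> topspace X. f1 (betaI X B r x) = f x" "\<forall>x \<in> topspace X. f2 (betaI X B r x) = f x"
      "p \<in> topspace (betaB X B r)" for f1 f2 p
    using betaB_continuous_map_eq[OF Hausdorff_Y that(1,2) _ that(5)] that(3,4) by simp
  moreover have "proper_map (betaB X B r) X' f'"
    if "continuous_map (betaB X B r) X' f'" "\<forall>x \<in> topspace X. f' (betaI X B r x) = f x" for f'
    using proper_map_continuous_extension that by blast
  ultimately show ?thesis
    by blast
qed
end
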